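(* Let $\Omega\subset\mathbb{R}^N$ be a bounded open set, $D=\operatorname{diam}(\Omega)$, and let $p,q:\Omega\to[1,\infty)$ be measurable with $q(x)\le p(x)\le p_+<\infty$ for all $x\in\Omega$. Let $K\subset\Omega$ be compact with $|K|=0$, and let $\varphi(t)=|\{x\in\Omega:d_K(x)<t\}|$. Let $\omega:(0,D]\to[0,\infty)$ be continuous and strictly decreasing, $\omega_0=\omega(D)$, with inverse $\omega^{-1}$ defined on the range of $\omega$; set $\varphi(\omega^{-1}(y)):=0$ for $y\ge\sup\omega$. Assume there is $c>0$ such that $$\frac{1}{p(x)-q(x)}\le c\,\omega(d_K(x))\quad\text{for a.e. } x\in\Omega\setminus K,$$ and $$\int_{\omega_0}^\infty\varphi(\omega^{-1}(y))\,a^y\,dy<\infty\quad\text{for all } a>1.$$ Then $L^{p(\cdot)}(\Omega)$ is almost-compactly embedded in $L^{q(\cdot)}(\Omega)$.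
   Context: $d_K(x)=\operatorname{dist}(x,K)$. The left side $\frac1{p(x)-q(x)}$ is interpreted as $+\infty$ where $p(x)=q(x)$. For measurable $e:\Omega\to[1,\infty)$, $\|u\|_{e(\cdot)}=\inf\{\lambda>0:\int_\Omega|u(x)/\lambda|^{e(x)}dx\le1\}$ and $L^{e(\cdot)}(\Omega)$ is the set of measurable $u$ with finite norm. Almost-compact embedding: for Banach function spaces $X,Y$ on $\Omega$, $X$ is almost-compactly embedded in $Y$ if for every sequence $\{E_n\}$ of measurable subsets of $\Omega$ with $\chi_{E_n}\to0$ pointwise a.e. one has $\lim_{n\to\infty}\sup_{\|u\|_X\le1}\|u\chi_{E_n}\|_Y=0$. *)

theory Defs
  imports "HOL-Analysis.Analysis"
begin

definition var_modular :: "('a::euclidean_space \<Rightarrow> real) \<Rightarrow> 'a set \<Rightarrow> ('a \<Rightarrow> real) \<Rightarrow> ennreal" where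
  "var_modular e \<Omega> u = (\<integral>\<^sup>+ x. ennreal (\<bar>u x\<bar> powr e x) * indicator \<Omega> x \<partial>lebesgue)"

text \<open>Luxemburg norm (value infinity when no admissible lambda exists).\<close>
definition var_norm :: "('a::euclidean_space \<Rightarrow> real) \<Rightarrow> 'a set \<Rightarrow> ('a \<Rightarrow> real) \<Rightarrow> ennreal" where
  "var_norm e \<Omega> u = (INF l\<in>{l::real. l > 0 \<and> var_modular e \<Omega> (\<lambda>x. u x / l) \<le> 1}. ennreal l)"

definition var_Lp :: "('a::euclidean_space \<Rightarrow> real) \<Rightarrow> 'a set \<Rightarrow> ('a \<Rightarrow> real) set" where
  "var_Lp e \<Omega> = {u. u \<in> borel_measurable (lebesgue_on \<Omega>) \<and> var_norm e \<Omega> u < \<infinity>}"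

definition almost_compact_emb ::
  "'a::euclidean_space set \<Rightarrow> ('a \<Rightarrow> real) set \<Rightarrow> (('a \<Rightarrow> real) \<Rightarrow> ennreal) \<Rightarrow> (('a \<Rightarrow> real) \<Rightarrow> ennreal) \<Rightarrow> bool" where
  "almost_compact_emb \<Omega> X normX normY \<longleftrightarrow>
     (\<forall>E :: nat \<Rightarrow> 'a set.
        (\<forall>n. E n \<in> sets lebesgue \<and> E n \<subseteq> \<Omega>) \<and>
        (AE x in lebesgue. x \<in> \<Omega> \<longrightarrow> (\<lambda>n. indicator (E n) x :: real) \<longlonglongrightarrow> 0)
        \<longrightarrow> (\<lambda>n. SUP u\<in>{u \<in> X. normX u \<le> 1}. normY (\<lambda>x. u x * indicator (E n) x)) \<longlonglongrightarrow> 0)"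

end

theory Submission
  imports Defs
begin

(*
  Fix l in (0, 1]. Where (|u|/l)^q(x) exceeds (1/2)(|u|/2)^p(x), the exponent gap
  p(x) - q(x) >= 1/(c omega(d_K x)) forces |u(x)|/2 < M^(c omega(d_K x)) with M = 2 (2/l)^p_+, so that
    (|u|/l)^q <= (1/2)(|u|/2)^p + C A^omega(d_K x)   a.e. on Omega,
  with C and A depending only on l and p_+. On the unit ball of L^p the first term has modular at
  most 1/2. The weight A^omega(d_K) is integrable by the layer-cake formula, its superlevel sets
  being {d_K < omega^-1(y)} of measure phi(omega^-1(y)); by dominated convergence its integral over
  E_n tends to 0. Hence eventually the q-modular of u chi_{E_n}/l is at most 1, uniformly in u.
*)

lemma powr_le_half_powr_plus_const:
  fixes t R P Q pp \<tau> :: real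
  assumes t: "0 \<le> t" and R: "1 \<le> R" and Q: "0 \<le> Q" "Q < P" "Q \<le> pp"
    and gap: "1 / (P - Q) \<le> \<tau>"
  shows "(R * t) powr Q \<le> 1/2 * t powr P + R powr pp * (2 * R powr pp) powr (pp * \<tau>)"
proof -
  define M where "M = 2 * R powr pp"
  have RQ: "R powr Q \<le> R powr pp" using R Q by (intro powr_mono) auto
  have R1: "1 \<le> R powr pp" using R Q by (intro ge_one_powr_ge_zero) auto
  have M1: "1 \<le> M" using R1 by (simp add: M_def)
  have "0 < 1 / (P - Q)" using Q by simp
  then have \<tau>: "0 \<le> \<tau>" using gap by linarith
  have M\<tau>: "1 \<le> M powr (pp * \<tau>)" using M1 Q \<tau> by (intro ge_one_powr_ge_zero) auto
  have RtQ: "(R * t) powr Q = R powr Q * t powr Q" using R t by (simp add: powr_mult)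
  have "t powr Q \<le> M powr (pp * \<tau>)" if big: "1/2 * t powr P < (R * t) powr Q"
  proof (cases "t \<le> 1")
    case True
    then have "t powr Q \<le> 1" using t Q by (intro powr_le1) auto
    with M\<tau> show ?thesis by linarith
  next
    case False
    have "t powr (P - Q) * t powr Q < 2 * R powr Q * t powr Q"
      using big RtQ by (simp add: powr_add[symmetric])
    then have "t powr (P - Q) < M" using RQ False by (simp add: M_def)
    then have "t < M powr (1 / (P - Q))"
      using Q False powr_less_mono2[of "1 / (P - Q)" "t powr (P - Q)" M] by (simp add: powr_powr)
    also have "\<dots> \<le> M powr \<tau>" using M1 gap by (intro powr_mono)
    finally have "t powr pp \<le> (M powr \<tau>) powr pp" using Q False by (intro powr_mono2) auto
    moreover have "t powr Q \<le> t powr pp" using Q False by (intro powr_mono) auto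
    ultimately show ?thesis by (simp add: powr_powr mult.commute)
  qed
  then have "(R * t) powr Q \<le> R powr pp * M powr (pp * \<tau>)" if "1/2 * t powr P < (R * t) powr Q"
    using that RtQ RQ by (simp add: mult_mono)
  moreover have "0 \<le> t powr P" "0 \<le> R powr pp * M powr (pp * \<tau>)" by simp_all
  ultimately show ?thesis unfolding M_def[symmetric] by linarith
qed

lemma infdist_le_diameter:
  assumes "bounded S" "x \<in> S" "K \<subseteq> S" "K \<noteq> {}"
  shows "infdist x K \<le> diameter S"
proof -
  obtain k where "k \<in> K" using assms(4) by blast
  then have "infdist x K \<le> dist x k" by (rule infdist_le)
  also have "\<dots> \<le> diameter S" using assms \<open>k \<in> K\<close> by (auto intro!: diameter_bounded_bound)
  finally show ?thesis .
qed

lemma strict_antimono_on_the_inv_into_gt: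
  fixes \<omega> :: "real \<Rightarrow> real"
  assumes cont: "continuous_on {0<..D} \<omega>" and mono: "strict_antimono_on {0<..D} \<omega>"
    and d: "d \<in> {0<..D}" and y: "\<omega> D \<le> y" "y < \<omega> d"
  shows "y \<in> \<omega> ` {0<..D}" and "d < the_inv_into {0<..D} \<omega> y"
proof -
  have "continuous_on {d..D} \<omega>" using d by (intro continuous_on_subset[OF cont]) auto
  then obtain t where t: "d \<le> t" "t \<le> D" "\<omega> t = y"
    using IVT2'[of \<omega> D y d] d y by auto
  then have "t \<in> {0<..D}" using d by auto
  then show "y \<in> \<omega> ` {0<..D}" using t by auto
  have "inj_on \<omega> {0<..D}" using mono strict_antimono_iff_antimono by blast
  then have "the_inv_into {0<..D} \<omega> y = t" using t \<open>t \<in> {0<..D}\<close> the_inv_into_f_f by fastforce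
  moreover have "t \<noteq> d" using t y by auto
  ultimately show "d < the_inv_into {0<..D} \<omega> y" using t by simp
qed

lemma (in sigma_finite_measure) nn_integral_powr_layer_cake:
  fixes f :: "'a \<Rightarrow> real" and A w :: real
  assumes [measurable]: "U \<in> sets M" "f \<in> borel_measurable M"
    and A: "1 < A" and w: "\<And>x. x \<in> U \<Longrightarrow> w \<le> f x"
  shows "(\<integral>\<^sup>+x. ennreal (A powr f x) * indicator U x \<partial>M)
    = ennreal (A powr w) * emeasure M U
      + ennreal (ln A) * (\<integral>\<^sup>+y. ennreal (A powr y) * emeasure M {x \<in> U. y < f x} * indicator {w..} y \<partial>lborel)"
proof -
  interpret pair_sigma_finite M lborel
    by (intro pair_sigma_finite.intro sigma_finite_measure_axioms lborel.sigma_finite_measure_axioms)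
  define F where "F x y = ennreal (A powr y) * indicator {w..} y * indicator {x \<in> U. y < f x} x"
    for x and y :: real
  have F_measurable[measurable]: "case_prod F \<in> borel_measurable (M \<Otimes>\<^sub>M lborel)"
    unfolding F_def by measurable
  have deriv: "DERIV (\<lambda>y. A powr y) y :> ln A * A powr y" for y
    using has_real_derivative_const_powr[where f="\<lambda>y. y" and f'="\<lambda>_. 1" and a=A and x=y] A by simp
  have FTC: "ennreal (A powr f x) * indicator U x
      = ennreal (A powr w) * indicator U x + ennreal (ln A) * (\<integral>\<^sup>+y. F x y \<partial>lborel)" for x
  proof (cases "x \<in> U")
    case True
    have "ennreal (ln A) * (\<integral>\<^sup>+y. F x y \<partial>lborel) = (\<integral>\<^sup>+y. ennreal (ln A) * F x y \<partial>lborel)"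
      by (rule nn_integral_cmult[symmetric]) (simp add: F_def)
    also have "\<dots> = (\<integral>\<^sup>+y. ennreal (ln A * A powr y) * indicator {w..f x} y \<partial>lborel)"
      using AE_lborel_singleton[of "f x"]
      by (intro nn_integral_cong_AE, eventually_elim)
         (use A in \<open>auto simp: F_def True indicator_def ennreal_mult\<close>)
    also have "\<dots> = ennreal (A powr f x - A powr w)"
      by (rule nn_integral_FTC_Icc[OF _ deriv _ w[OF True]]) (use A in auto)
    finally show ?thesis
      using True A w[OF True] by (simp add: ennreal_plus[symmetric] del: ennreal_plus)
  qed (simp add: F_def)
  have "(\<integral>\<^sup>+x. ennreal (A powr f x) * indicator U x \<partial>M)
      = ennreal (A powr w) * emeasure M U + ennreal (ln A) * (\<integral>\<^sup>+x. (\<integral>\<^sup>+y. F x y \<partial>lborel) \<partial>M)"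
    by (simp add: FTC nn_integral_add nn_integral_cmult nn_integral_cmult_indicator
        lborel.borel_measurable_nn_integral)
  also have "(\<integral>\<^sup>+x. (\<integral>\<^sup>+y. F x y \<partial>lborel) \<partial>M) = (\<integral>\<^sup>+y. (\<integral>\<^sup>+x. F x y \<partial>M) \<partial>lborel)"
    by (rule Fubini'[symmetric]) measurable
  also have "\<dots> = (\<integral>\<^sup>+y. ennreal (A powr y) * emeasure M {x \<in> U. y < f x} * indicator {w..} y \<partial>lborel)"
    unfolding F_def by (subst nn_integral_cmult_indicator) (simp_all add: ac_simps)
  finally show ?thesis .
qed

lemma nn_integral_powr_omega_infdist_finite:
  fixes \<Omega> K :: "'n::euclidean_space set" and \<omega> :: "real \<Rightarrow> real" and A :: real
  defines "D \<equiv> diameter \<Omega>"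
  assumes \<Omega>: "open \<Omega>" "bounded \<Omega>" and K: "compact K" "K \<subseteq> \<Omega>" "K \<noteq> {}"
    and cont: "continuous_on {0<..D} \<omega>" and mono: "strict_antimono_on {0<..D} \<omega>"
    and A: "1 < A"
    and level_integral: "(\<integral>\<^sup>+ y. ennreal ((if y \<in> \<omega> ` {0<..D}
                      then measure lebesgue {x \<in> \<Omega>. infdist x K < the_inv_into {0<..D} \<omega> y}
                      else 0) * A powr y) * indicator {\<omega> D..} y \<partial>lborel) < \<infinity>"
  shows "(\<lambda>x. indicator (\<Omega> - K) x * A powr \<omega> (infdist x K)) \<in> borel_measurable lebesgue"
    and "(\<integral>\<^sup>+x. ennreal (indicator (\<Omega> - K) x * A powr \<omega> (infdist x K)) \<partial>lebesgue) < \<infinity>"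
proof -
  define U where "U = \<Omega> - K"
  define R where "R = (\<lambda>x. indicator U x * \<omega> (infdist x K))"
  define \<phi> where "\<phi> y = (if y \<in> \<omega> ` {0<..D}
    then measure lebesgue {x \<in> \<Omega>. infdist x K < the_inv_into {0<..D} \<omega> y} else 0)" for y
  have [measurable]: "(\<lambda>x. infdist x K) \<in> borel_measurable borel" "\<Omega> \<in> sets borel"
    using \<Omega> borel_measurable_continuous_onI[OF continuous_on_infdist[OF continuous_on_id]] by auto
  have U_open: "open U" using \<Omega> K by (auto simp: U_def compact_imp_closed)
  have dist_U: "infdist x K \<in> {0<..D}" if "x \<in> U" for x
    using that K \<Omega> by (auto simp: U_def D_def compact_imp_closed infdist_le_diameter
        intro!: infdist_pos_not_in_closed)
  have "continuous_on U (\<lambda>x. \<omega> (infdist x K))"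
    using dist_U by (intro continuous_on_compose2[OF cont continuous_on_infdist[OF continuous_on_id]]) auto
  then have "(\<lambda>x. indicator U x *\<^sub>R \<omega> (infdist x K)) \<in> borel_measurable borel"
    using U_open by (intro borel_measurable_continuous_on_indicator) auto
  then have R_measurable[measurable]: "R \<in> borel_measurable lborel" by (simp add: R_def)
  have R_ge: "\<omega> D \<le> R x" if "x \<in> U" for x
    using dist_U[OF that] monotone_onD[OF mono, of "infdist x K" D] that
    by (cases "infdist x K = D") (auto simp: R_def)
  have \<phi>_nonneg: "0 \<le> \<phi> y" for y by (simp add: \<phi>_def)
  \<comment> \<open>The superlevel sets of omega(d_K) are sublevel sets of d_K; this is where the hypothesis
    on phi enters.\<close>
  have level_le: "emeasure lborel {x \<in> U. y < R x} \<le> ennreal (\<phi> y)" if "\<omega> D \<le> y" for y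
  proof (cases "y \<in> \<omega> ` {0<..D}")
    case True
    let ?S = "{x \<in> \<Omega>. infdist x K < the_inv_into {0<..D} \<omega> y}"
    have "{x \<in> U. y < R x} \<subseteq> ?S"
      using strict_antimono_on_the_inv_into_gt(2)[OF cont mono dist_U that] by (auto simp: U_def R_def)
    moreover have S_sets: "?S \<in> sets lborel" by measurable
    ultimately have "emeasure lborel {x \<in> U. y < R x} \<le> emeasure lborel ?S" by (rule emeasure_mono)
    also have "\<dots> = ennreal (\<phi> y)"
      using True S_sets emeasure_bounded_finite[of ?S] \<Omega>(2)
      by (simp add: \<phi>_def emeasure_eq_ennreal_measure bounded_subset)
    finally show ?thesis .
  next
    case False
    have "{x \<in> U. y < R x} = {}"
      using False strict_antimono_on_the_inv_into_gt(1)[OF cont mono dist_U that] by (auto simp: R_def)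
    then show ?thesis by (simp only: emeasure_empty zero_le)
  qed
  have "(\<integral>\<^sup>+x. ennreal (A powr R x) * indicator U x \<partial>lborel)
      = ennreal (A powr \<omega> D) * emeasure lborel U
        + ennreal (ln A) * (\<integral>\<^sup>+y. ennreal (A powr y) * emeasure lborel {x \<in> U. y < R x}
            * indicator {\<omega> D..} y \<partial>lborel)"
    using U_open A R_ge by (intro lborel.nn_integral_powr_layer_cake) auto
  also have "\<dots> \<le> ennreal (A powr \<omega> D) * emeasure lborel U
        + ennreal (ln A) * (\<integral>\<^sup>+y. ennreal (\<phi> y * A powr y) * indicator {\<omega> D..} y \<partial>lborel)"
  proof (intro add_left_mono mult_left_mono nn_integral_mono)
    fix y
    have "ennreal (A powr y) * emeasure lborel {x \<in> U. y < R x} \<le> ennreal (A powr y) * ennreal (\<phi> y)"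
      if "\<omega> D \<le> y"
      using level_le[OF that] by (rule mult_left_mono) simp
    then show "ennreal (A powr y) * emeasure lborel {x \<in> U. y < R x} * indicator {\<omega> D..} y
        \<le> ennreal (\<phi> y * A powr y) * indicator {\<omega> D..} y"
      using \<phi>_nonneg[of y] by (simp add: indicator_def ennreal_mult mult.commute)
  qed simp
  also have "\<dots> < \<infinity>"
    using level_integral emeasure_bounded_finite[of U] \<Omega>(2)
    by (simp add: \<phi>_def ennreal_mult_less_top bounded_subset U_def)
  finally have "(\<integral>\<^sup>+x. ennreal (A powr R x) * indicator U x \<partial>lborel) < \<infinity>" .
  moreover have G_eq: "indicator U x * A powr \<omega> (infdist x K) = indicator U x * A powr R x" for x
    by (simp add: R_def indicator_def)
  ultimately show "(\<integral>\<^sup>+x. ennreal (indicator (\<Omega> - K) x * A powr \<omega> (infdist x K)) \<partial>lebesgue) < \<infinity>"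
    unfolding U_def[symmetric] G_eq
    by (simp add: nn_integral_completion indicator_mult_ennreal mult.commute)
  have [measurable]: "U \<in> sets borel" using U_open by simp
  have "(\<lambda>x. indicator U x * A powr R x) \<in> borel_measurable lborel" by measurable
  then show "(\<lambda>x. indicator (\<Omega> - K) x * A powr \<omega> (infdist x K)) \<in> borel_measurable lebesgue"
    unfolding U_def[symmetric] G_eq by (rule measurable_completion)
qed

lemma nn_integral_indicator_tendsto_zero:
  fixes G :: "'a \<Rightarrow> ennreal"
  assumes [measurable]: "G \<in> borel_measurable M" "\<And>n. E n \<in> sets M"
    and G_finite: "integral\<^sup>N M G < \<infinity>"
    and shrink: "AE x in M. G x = 0 \<or> (\<lambda>n. indicator (E n) x :: real) \<longlonglongrightarrow> 0"
  shows "(\<lambda>n. \<integral>\<^sup>+x. G x * indicator (E n) x \<partial>M) \<longlonglongrightarrow> 0"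
proof -
  have "(\<lambda>n. \<integral>\<^sup>+x. G x * indicator (E n) x \<partial>M) \<longlonglongrightarrow> (\<integral>\<^sup>+x. 0 \<partial>M)"
  proof (rule nn_integral_dominated_convergence[where w=G])
    show "AE x in M. (\<lambda>n. G x * indicator (E n) x) \<longlonglongrightarrow> 0"
      using shrink
    proof eventually_elim
      case (elim x)
      have "\<forall>\<^sub>F n in sequentially. G x = 0 \<or> x \<notin> E n"
      proof (cases "G x = 0")
        case False
        with elim have "\<forall>\<^sub>F n in sequentially. dist (indicator (E n) x :: real) 0 < 1"
          by (intro tendstoD) auto
        then show ?thesis by (rule eventually_mono) (simp add: indicator_def split: if_splits)
      qed simp
      then have "\<forall>\<^sub>F n in sequentially. G x * indicator (E n) x = 0"
        by (rule eventually_mono) auto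
      then show ?case by (rule tendsto_eventually)
    qed
  qed (use G_finite in \<open>auto simp: indicator_def\<close>)
  then show ?thesis by simp
qed

lemma ennreal_tendsto_zero_if_eventually_le:
  fixes f :: "nat \<Rightarrow> ennreal"
  assumes "\<And>l. 0 < l \<Longrightarrow> l \<le> 1 \<Longrightarrow> \<forall>\<^sub>F n in sequentially. f n \<le> ennreal l"
  shows "f \<longlonglongrightarrow> 0"
proof (rule order_tendstoI)
  fix a :: ennreal
  assume "0 < a"
  then obtain l where l: "0 < l" "l \<le> 1" "ennreal l < a"
  proof (cases a)
    case (real r)
    with \<open>0 < a\<close> show ?thesis
      by (intro that[of "min 1 (r / 2)"]) (auto simp: ennreal_less_iff min_def)
  qed (auto intro: that[of 1])
  show "\<forall>\<^sub>F n in sequentially. f n < a"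
    using assms[OF l(1,2)] by (rule eventually_mono) (use l(3) in auto)
qed simp

lemma var_modular_le_one_if_var_norm_less:
  assumes "\<And>x. x \<in> \<Omega> \<Longrightarrow> 0 \<le> e x" and "var_norm e \<Omega> u < ennreal l"
  shows "var_modular e \<Omega> (\<lambda>x. u x / l) \<le> 1"
proof -
  obtain l0 where l0: "0 < l0" "var_modular e \<Omega> (\<lambda>x. u x / l0) \<le> 1" "ennreal l0 < ennreal l"
    using assms(2) unfolding var_norm_def INF_less_iff by blast
  then have "l0 < l" by (simp add: ennreal_less_iff)
  have "var_modular e \<Omega> (\<lambda>x. u x / l) \<le> var_modular e \<Omega> (\<lambda>x. u x / l0)"
    unfolding var_modular_def
  proof (intro nn_integral_mono)
    fix x
    have "\<bar>u x / l\<bar> \<le> \<bar>u x / l0\<bar>"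
      using l0(1) \<open>l0 < l\<close> by (simp add: abs_div divide_left_mono)
    then show "ennreal (\<bar>u x / l\<bar> powr e x) * indicator \<Omega> x \<le> ennreal (\<bar>u x / l0\<bar> powr e x) * indicator \<Omega> x"
      using assms(1)[of x] by (auto simp: indicator_def intro!: ennreal_leI powr_mono2)
  qed
  with l0(2) show ?thesis by simp
qed

lemma var_norm_mult_indicator_le:
  fixes u p q g :: "'a::euclidean_space \<Rightarrow> real"
  assumes [measurable]: "\<Omega> \<in> sets lebesgue" "E \<in> sets lebesgue" "g \<in> borel_measurable lebesgue"
    "u \<in> borel_measurable (lebesgue_on \<Omega>)" "p \<in> borel_measurable (lebesgue_on \<Omega>)"
    and l: "0 < l" and C: "0 \<le> C" and g: "\<And>x. 0 \<le> g x"
    and modular_half: "var_modular p \<Omega> (\<lambda>x. u x / 2) \<le> 1"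
    and pointwise: "AE x in lebesgue. x \<in> \<Omega> \<inter> E \<longrightarrow>
      (\<bar>u x\<bar> / l) powr q x \<le> 1/2 * (\<bar>u x\<bar> / 2) powr p x + C * g x"
    and small: "ennreal C * (\<integral>\<^sup>+x. ennreal (g x) * indicator E x \<partial>lebesgue) \<le> 1/2"
  shows "var_norm q \<Omega> (\<lambda>x. u x * indicator E x) \<le> ennreal l"
proof -
  define F where "F = (\<lambda>x. ennreal (\<bar>u x / 2\<bar> powr p x) * indicator \<Omega> x)"
  have "(\<lambda>x. ennreal (\<bar>u x / 2\<bar> powr p x)) \<in> borel_measurable (lebesgue_on \<Omega>)" by measurable
  then have F_measurable[measurable]: "F \<in> borel_measurable lebesgue"
    unfolding F_def by (subst (asm) borel_measurable_restrict_space_iff_ennreal) auto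
  have "var_modular q \<Omega> (\<lambda>x. u x * indicator E x / l)
      \<le> (\<integral>\<^sup>+x. ennreal (1/2) * F x + ennreal C * (ennreal (g x) * indicator E x) \<partial>lebesgue)"
    unfolding var_modular_def using pointwise
  proof (intro nn_integral_mono_AE, eventually_elim)
    case (elim x)
    show ?case
    proof (cases "x \<in> \<Omega> \<inter> E")
      case True
      then have "ennreal ((\<bar>u x\<bar> / l) powr q x) \<le> ennreal (1/2 * (\<bar>u x\<bar> / 2) powr p x + C * g x)"
        using elim by (intro ennreal_leI) auto
      also have "\<dots> = ennreal (1/2 * (\<bar>u x\<bar> / 2) powr p x) + ennreal (C * g x)"
        using C g[of x] by (intro ennreal_plus) auto
      also have "\<dots> = ennreal (1/2) * ennreal ((\<bar>u x\<bar> / 2) powr p x) + ennreal C * ennreal (g x)"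
        using C g[of x] by (subst (1 2) ennreal_mult) auto
      finally show ?thesis
        using True l by (simp add: F_def abs_div)
    qed (auto simp: indicator_def)
  qed
  also have "\<dots> = ennreal (1/2) * integral\<^sup>N lebesgue F
      + ennreal C * (\<integral>\<^sup>+x. ennreal (g x) * indicator E x \<partial>lebesgue)"
    by (simp add: nn_integral_add nn_integral_cmult)
  also have "\<dots> \<le> ennreal (1/2) * 1 + 1/2"
    using modular_half small by (intro add_mono mult_left_mono) (auto simp: var_modular_def F_def)
  also have "\<dots> = 1"
    using ennreal_plus[of "1/2" "1/2"] by (simp add: divide_ennreal_def)
  finally show ?thesis
    unfolding var_norm_def using l by (intro INF_lower) auto
qed

lemma almost_compact_emb_var_LpI:
  fixes \<Omega> :: "'a::euclidean_space set" and p q :: "'a \<Rightarrow> real"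
  assumes [measurable]: "\<Omega> \<in> sets lebesgue" "p \<in> borel_measurable (lebesgue_on \<Omega>)"
    and p_nonneg: "\<And>x. x \<in> \<Omega> \<Longrightarrow> 0 \<le> p x"
    and domination: "\<And>l. 0 < l \<Longrightarrow> l \<le> 1 \<Longrightarrow> \<exists>C g. 0 \<le> C \<and> g \<in> borel_measurable lebesgue
      \<and> (\<forall>x. 0 \<le> g x) \<and> (\<forall>x. x \<notin> \<Omega> \<longrightarrow> g x = 0) \<and> (\<integral>\<^sup>+x. ennreal (g x) \<partial>lebesgue) < \<infinity>
      \<and> (AE x in lebesgue. x \<in> \<Omega> \<longrightarrow> (\<forall>s\<ge>0. (s / l) powr q x \<le> 1/2 * (s / 2) powr p x + C * g x))"
  shows "almost_compact_emb \<Omega> (var_Lp p \<Omega>) (var_norm p \<Omega>) (var_norm q \<Omega>)"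
  unfolding almost_compact_emb_def
proof (intro allI impI ennreal_tendsto_zero_if_eventually_le)
  fix E :: "nat \<Rightarrow> 'a set" and l :: real
  assume E: "(\<forall>n. E n \<in> sets lebesgue \<and> E n \<subseteq> \<Omega>) \<and>
    (AE x in lebesgue. x \<in> \<Omega> \<longrightarrow> (\<lambda>n. indicator (E n) x :: real) \<longlonglongrightarrow> 0)"
    and "0 < l" "l \<le> 1"
  obtain C g where C: "0 \<le> C" and g: "g \<in> borel_measurable lebesgue" "\<And>x. 0 \<le> g x"
      "\<And>x. x \<notin> \<Omega> \<Longrightarrow> g x = 0" "(\<integral>\<^sup>+x. ennreal (g x) \<partial>lebesgue) < \<infinity>"
    and pointwise: "AE x in lebesgue. x \<in> \<Omega> \<longrightarrow>
      (\<forall>s\<ge>0. (s / l) powr q x \<le> 1/2 * (s / 2) powr p x + C * g x)"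
    using domination[OF \<open>0 < l\<close> \<open>l \<le> 1\<close>] by blast
  have "AE x in lebesgue. g x = 0 \<or> (\<lambda>n. indicator (E n) x :: real) \<longlonglongrightarrow> 0"
    using conjunct2[OF E] by (rule eventually_mono) (use g(3) in blast)
  then have "(\<lambda>n. \<integral>\<^sup>+x. ennreal (g x) * indicator (E n) x \<partial>lebesgue) \<longlonglongrightarrow> 0"
    using E g by (intro nn_integral_indicator_tendsto_zero) auto
  then have "(\<lambda>n. ennreal C * (\<integral>\<^sup>+x. ennreal (g x) * indicator (E n) x \<partial>lebesgue)) \<longlonglongrightarrow> 0"
    using ennreal_tendsto_cmult[of "ennreal C"] by fastforce
  then have "\<forall>\<^sub>F n in sequentially. ennreal C * (\<integral>\<^sup>+x. ennreal (g x) * indicator (E n) x \<partial>lebesgue) < 1/2"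
    by (intro order_tendstoD) (auto simp: divide_ennreal_def ennreal_inverse_positive)
  then show "\<forall>\<^sub>F n in sequentially. (SUP u\<in>{u \<in> var_Lp p \<Omega>. var_norm p \<Omega> u \<le> 1}.
      var_norm q \<Omega> (\<lambda>x. u x * indicator (E n) x)) \<le> ennreal l"
  proof (rule eventually_mono, intro SUP_least)
    fix n u
    assume small: "ennreal C * (\<integral>\<^sup>+x. ennreal (g x) * indicator (E n) x \<partial>lebesgue) < 1/2"
      and u: "u \<in> {u \<in> var_Lp p \<Omega>. var_norm p \<Omega> u \<le> 1}"
    have "var_norm p \<Omega> u < ennreal 2" using u by (auto simp: order_le_less_trans)
    then have modular_half: "var_modular p \<Omega> (\<lambda>x. u x / 2) \<le> 1"
      using var_modular_le_one_if_var_norm_less[of \<Omega> p u 2] p_nonneg by simp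
    show "var_norm q \<Omega> (\<lambda>x. u x * indicator (E n) x) \<le> ennreal l"
    proof (rule var_norm_mult_indicator_le[where g=g and C=C])
      show "AE x in lebesgue. x \<in> \<Omega> \<inter> E n \<longrightarrow>
          (\<bar>u x\<bar> / l) powr q x \<le> 1/2 * (\<bar>u x\<bar> / 2) powr p x + C * g x"
        using pointwise by eventually_elim auto
    qed (use E u C g small modular_half \<open>0 < l\<close> in \<open>auto simp: var_Lp_def\<close>)
  qed
qed

theorem lemma3p8:
  fixes \<Omega> K :: "'n::euclidean_space set"
    and p q :: "'n \<Rightarrow> real" and p_plus c :: real and \<omega> :: "real \<Rightarrow> real"
  assumes "open \<Omega>" and "bounded \<Omega>"
    and "p \<in> borel_measurable (lebesgue_on \<Omega>)" and "q \<in> borel_measurable (lebesgue_on \<Omega>)"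
    and "\<And>x. x \<in> \<Omega> \<Longrightarrow> 1 \<le> q x \<and> q x \<le> p x \<and> p x \<le> p_plus"
    and "compact K" and "K \<subseteq> \<Omega>" and "K \<noteq> {}" and "emeasure lebesgue K = 0"
    and "continuous_on {0<..diameter \<Omega>} \<omega>"
    and "strict_antimono_on {0<..diameter \<Omega>} \<omega>"
    and "\<And>t. t \<in> {0<..diameter \<Omega>} \<Longrightarrow> 0 \<le> \<omega> t"
    and "c > 0"
    and "AE x in lebesgue. x \<in> \<Omega> - K \<longrightarrow>
           (if p x = q x then (\<infinity>::ereal) else ereal (1 / (p x - q x)))
             \<le> ereal (c * \<omega> (infdist x K))"
    and "\<And>a::real. a > 1 \<Longrightarrow>
           (\<integral>\<^sup>+ y. ennreal ((if y \<in> \<omega> ` {0<..diameter \<Omega>}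
                      then measure lebesgue {x \<in> \<Omega>. infdist x K < the_inv_into {0<..diameter \<Omega>} \<omega> y}
                      else 0) * a powr y) * indicator {\<omega> (diameter \<Omega>)..} y \<partial>lborel) < \<infinity>"
  shows "almost_compact_emb \<Omega> (var_Lp p \<Omega>) (var_norm p \<Omega>) (var_norm q \<Omega>)"
proof (rule almost_compact_emb_var_LpI)
  show "\<Omega> \<in> sets lebesgue" "p \<in> borel_measurable (lebesgue_on \<Omega>)"
    using assms(1,3) by auto
  show "0 \<le> p x" if "x \<in> \<Omega>" for x
    using assms(5)[OF that] by linarith
  have p_plus: "1 \<le> p_plus" using assms(5,7,8) by force
  have K_null: "K \<in> null_sets lebesgue" using assms(6,9) by (simp add: null_sets_def compact_imp_closed)
  fix l :: real
  assume "0 < l" "l \<le> 1"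
  define R where "R = 2 / l"
  define C where "C = R powr p_plus"
  define A where "A = (2 * C) powr (p_plus * c)"
  define g where "g = (\<lambda>x. indicator (\<Omega> - K) x * A powr \<omega> (infdist x K))"
  have "1 \<le> R" using \<open>0 < l\<close> \<open>l \<le> 1\<close> by (simp add: R_def)
  then have "1 \<le> C" using p_plus by (simp add: C_def ge_one_powr_ge_zero)
  then have "1 < A" using p_plus assms(13) by (simp add: A_def gr_one_powr)
  note g_integrable = nn_integral_powr_omega_infdist_finite[OF assms(1,2,6,7,8,10,11) this
      assms(15)[OF this], folded g_def]
  have "AE x in lebesgue. x \<in> \<Omega> \<longrightarrow> (\<forall>s\<ge>0. (s / l) powr q x \<le> 1/2 * (s / 2) powr p x + C * g x)"
    using assms(14) AE_not_in[OF K_null]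
  proof eventually_elim
    case (elim x)
    show ?case
    proof (intro impI allI)
      fix s :: real
      assume "x \<in> \<Omega>" "0 \<le> s"
      then have "(R * (s / 2)) powr q x
          \<le> 1/2 * (s / 2) powr p x + C * (2 * C) powr (p_plus * (c * \<omega> (infdist x K)))"
        unfolding C_def using elim assms(5)[of x] \<open>1 \<le> R\<close>
        by (intro powr_le_half_powr_plus_const) (auto split: if_splits)
      then show "(s / l) powr q x \<le> 1/2 * (s / 2) powr p x + C * g x"
        using \<open>x \<in> \<Omega>\<close> elim by (simp add: R_def g_def A_def powr_powr mult.assoc)
    qed
  qed
  then show "\<exists>C g. 0 \<le> C \<and> g \<in> borel_measurable lebesgue \<and> (\<forall>x. 0 \<le> g x)
      \<and> (\<forall>x. x \<notin> \<Omega> \<longrightarrow> g x = 0) \<and> (\<integral>\<^sup>+x. ennreal (g x) \<partial>lebesgue) < \<infinity>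
      \<and> (AE x in lebesgue. x \<in> \<Omega> \<longrightarrow> (\<forall>s\<ge>0. (s / l) powr q x \<le> 1/2 * (s / 2) powr p x + C * g x))"
    using g_integrable \<open>1 \<le> C\<close> by (intro exI[of _ C] exI[of _ g]) (auto simp: g_def)
qed

end
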